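(* For every feasible set of jobs, the online policy Thrashing completes every job $j$ with interval stretch $s_j=(C_j-r_j)/(d_j-r_j)\le 4$.
   Context: Jobs $j$ have release time $r_j$, due date $d_j>r_j$, work $w_j>0$, and linear speed function $f_j(t)=m_j(t-r_j)$ with $m_j>0$. A single processor runs at most one job at a time, preemption is allowed, and running job $j$ during a set of times $S$ completes $\int_S f_j(t)\,dt$ units of its work; $C_j$ denotes the completion time of job $j$. A set of jobs is feasible if some schedule runs each job only within $[r_j,d_j]$ and completes it by $d_j$. Online: job $j$ becomes known only at time $r_j$. The policy Thrashing: at each time $t$, consider the released unfinished jobs $j$ whose current stretch $(t-r_j)/(d_j-r_j)$ is at least $2$; if there is none, the processor idles, otherwise it runs the one among them with the latest release time (ties broken arbitrarily). *)

theory Defs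
  imports "HOL-Analysis.Analysis"
begin

text \<open>Each job j has release time r j,
 due date d j, work w j and speed slope m j; its speed function is
 f_j(t) = m j * (t - r j).\<close>

definition rate :: "(real \<Rightarrow> 'j option) \<Rightarrow> ('j \<Rightarrow> real) \<Rightarrow> ('j \<Rightarrow> real) \<Rightarrow> 'j \<Rightarrow> real \<Rightarrow> real" where
  "rate \<sigma> r m j t = (if \<sigma> t = Some j then m j * (t - r j) else 0)"

definition work :: "(real \<Rightarrow> 'j option) \<Rightarrow> ('j \<Rightarrow> real) \<Rightarrow> ('j \<Rightarrow> real) \<Rightarrow> 'j \<Rightarrow> real \<Rightarrow> real \<Rightarrow> real" where
  "work \<sigma> r m j a b = integral {a..b} (rate \<sigma> r m j)"

definition valid_schedule :: "'j set \<Rightarrow> ('j \<Rightarrow> real) \<Rightarrow> ('j \<Rightarrow> real) \<Rightarrow> (real \<Rightarrow> 'j option) \<Rightarrow> bool" where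
  "valid_schedule J r m \<sigma> \<longleftrightarrow>
     (\<forall>t j. \<sigma> t = Some j \<longrightarrow> j \<in> J) \<and>
     (\<forall>j\<in>J. \<forall>a b. rate \<sigma> r m j integrable_on {a..b})"

definition feasible :: "'j set \<Rightarrow> ('j \<Rightarrow> real) \<Rightarrow> ('j \<Rightarrow> real) \<Rightarrow> ('j \<Rightarrow> real) \<Rightarrow> ('j \<Rightarrow> real) \<Rightarrow> bool" where
  "feasible J r d w m \<longleftrightarrow>
     (\<exists>\<sigma>. valid_schedule J r m \<sigma> \<and>
          (\<forall>t j. \<sigma> t = Some j \<longrightarrow> r j \<le> t \<and> t \<le> d j) \<and>
          (\<forall>j\<in>J. work \<sigma> r m j (r j) (d j) \<ge> w j))"

definition thrash_active :: "'j set \<Rightarrow> ('j \<Rightarrow> real) \<Rightarrow> ('j \<Rightarrow> real) \<Rightarrow> ('j \<Rightarrow> real) \<Rightarrow> ('j \<Rightarrow> real)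
     \<Rightarrow> (real \<Rightarrow> 'j option) \<Rightarrow> real \<Rightarrow> 'j set" where
  "thrash_active J r d w m \<sigma> t =
     {j \<in> J. r j \<le> t \<and> work \<sigma> r m j (r j) t < w j \<and> (t - r j) / (d j - r j) \<ge> 2}"

definition thrashing :: "'j set \<Rightarrow> ('j \<Rightarrow> real) \<Rightarrow> ('j \<Rightarrow> real) \<Rightarrow> ('j \<Rightarrow> real) \<Rightarrow> ('j \<Rightarrow> real)
     \<Rightarrow> (real \<Rightarrow> 'j option) \<Rightarrow> bool" where
  "thrashing J r d w m \<sigma> \<longleftrightarrow> valid_schedule J r m \<sigma> \<and>
     (\<forall>t. (thrash_active J r d w m \<sigma> t = {} \<longrightarrow> \<sigma> t = None) \<and>
          (thrash_active J r d w m \<sigma> t \<noteq> {} \<longrightarrow>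
             (\<exists>j\<in>thrash_active J r d w m \<sigma> t. \<sigma> t = Some j \<and>
                (\<forall>k\<in>thrash_active J r d w m \<sigma> t. r k \<le> r j))))"

definition completion_time :: "(real \<Rightarrow> 'j option) \<Rightarrow> ('j \<Rightarrow> real) \<Rightarrow> ('j \<Rightarrow> real) \<Rightarrow> ('j \<Rightarrow> real) \<Rightarrow> 'j \<Rightarrow> real" where
  "completion_time \<sigma> r w m j = Inf {t. r j \<le> t \<and> work \<sigma> r m j (r j) t \<ge> w j}"

end

theory Submission
  imports Defs
begin

text \<open>Let p = d j - r j and suppose j is still unfinished at a time t \<ge> r j + 2 p. Throughout
  [r j + 2 p, t] job j is eligible, so Thrashing is busy with jobs k released no earlier than r j
  whose stretch is at least 2 (so their deadline has passed). Measuring each job's speed in units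
  of m k (d k - r k), its largest speed inside its window, Thrashing therefore works at load at
  least 2 on [r j + 2 p, t], while a feasible schedule never exceeds load 1. Thrashing never does
  more than w k work on k, and the feasible schedule does at least w k on each such k inside
  [r j, t]; comparing loads gives 2 (t - r j - 2 p) \<le> t - r j, i.e. t \<le> r j + 4 p.\<close>

lemma integral_le_if_vanishing_above:
  fixes f :: "real \<Rightarrow> real"
  assumes int: "\<And>b. f integrable_on {a..b}" and "0 \<le> c"
    and vanish: "\<And>x. a \<le> x \<Longrightarrow> c < integral {a..x} f \<Longrightarrow> f x = 0"
  shows "integral {a..t} f \<le> c"
proof (rule ccontr)
  \<comment> \<open>after the last time s at which the integral is at most c, the integrand vanishes\<close>
  assume above: "\<not> integral {a..t} f \<le> c"
  define g where "g x = integral {a..x} f" for x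
  have "a \<le> t" using above \<open>0 \<le> c\<close> by (cases "a \<le> t") auto
  define S where "S = {a..t} \<inter> g -` {..c}"
  have "closed S" unfolding S_def g_def
    by (intro continuous_closed_preimage indefinite_integral_continuous_1 int) auto
  moreover have "a \<in> S" "bdd_above S" using \<open>a \<le> t\<close> \<open>0 \<le> c\<close> by (auto simp: S_def g_def)
  ultimately have "Sup S \<in> S" using closed_contains_Sup by blast
  define s where "s = Sup S"
  have s: "a \<le> s" "s \<le> t" "g s \<le> c" using \<open>Sup S \<in> S\<close> by (auto simp: S_def s_def)
  have "f x = 0" if "x \<in> {s..t} - {s}" for x
  proof -
    have "x \<notin> S" using cSup_upper[OF _ \<open>bdd_above S\<close>, of x] that by (force simp: s_def)
    then show ?thesis using that s by (intro vanish) (auto simp: S_def g_def)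
  qed
  then have "integral {s..t} f = 0"
    using integral_spike[of "{s}" "{s..t}" "\<lambda>_. 0" f] by auto
  moreover have "g s + integral {s..t} f = g t"
    unfolding g_def using s(1,2) int by (rule Henstock_Kurzweil_Integration.integral_combine)
  ultimately show False using above s by (simp add: g_def)
qed

lemma thrashing_runs_active:
  assumes "thrashing J r d w m \<sigma>" "\<sigma> t = Some k"
  shows "k \<in> thrash_active J r d w m \<sigma> t"
  using assms unfolding thrashing_def by (metis option.distinct(1) option.inject)

lemma thrashing_runs_some_active:
  assumes "thrashing J r d w m \<sigma>" "thrash_active J r d w m \<sigma> t \<noteq> {}"
  shows "\<sigma> t \<noteq> None"
  using assms unfolding thrashing_def by auto

lemma thrashing_preempts_for_later_released:
  assumes "thrashing J r d w m \<sigma>" "j \<in> thrash_active J r d w m \<sigma> t" "\<sigma> t = Some k"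
  shows "r j \<le> r k"
  using assms unfolding thrashing_def by (metis empty_iff option.inject)

lemma thrash_active_deadline_passed:
  assumes "k \<in> thrash_active J r d w m \<sigma> t" "r k < d k"
  shows "d k \<le> t"
  using assms by (auto simp: thrash_active_def le_divide_eq)

lemma thrashing_rate_nonneg:
  assumes "thrashing J r d w m \<sigma>" "\<And>k. k \<in> J \<Longrightarrow> 0 \<le> m k"
  shows "0 \<le> rate \<sigma> r m k t"
  using thrashing_runs_active[OF assms(1)] assms(2)
  by (auto simp: rate_def thrash_active_def)

lemma thrashing_rate_eq_0_before_release:
  assumes "thrashing J r d w m \<sigma>" "t \<le> r k"
  shows "rate \<sigma> r m k t = 0"
  using thrashing_runs_active[OF assms(1), of t k] assms(2)
  by (auto simp: rate_def thrash_active_def)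

lemma thrashing_rate_integrable:
  assumes "thrashing J r d w m \<sigma>" "k \<in> J"
  shows "rate \<sigma> r m k integrable_on {a..b}"
  using assms unfolding thrashing_def valid_schedule_def by auto

lemma thrashing_work_le_demand:
  assumes thr: "thrashing J r d w m \<sigma>" and "k \<in> J" "0 \<le> w k"
  shows "work \<sigma> r m k (r k) t \<le> w k"
  unfolding work_def
proof (rule integral_le_if_vanishing_above)
  fix x assume "w k < integral {r k..x} (rate \<sigma> r m k)"
  then have "k \<notin> thrash_active J r d w m \<sigma> x" by (auto simp: thrash_active_def work_def)
  then show "rate \<sigma> r m k x = 0" using thrashing_runs_active[OF thr] by (auto simp: rate_def)
qed (use assms thrashing_rate_integrable in auto)

lemma thrashing_integral_rate_le_demand:
  assumes thr: "thrashing J r d w m \<sigma>" and m_nonneg: "\<And>k. k \<in> J \<Longrightarrow> 0 \<le> m k"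
    and "k \<in> J" "0 \<le> w k"
  shows "integral {x..y} (rate \<sigma> r m k) \<le> w k"
proof -
  note int = thrashing_rate_integrable[OF thr \<open>k \<in> J\<close>]
  define lo where "lo = min x (r k)"
  define hi where "hi = max y (r k)"
  have "integral {x..y} (rate \<sigma> r m k) \<le> integral {lo..hi} (rate \<sigma> r m k)"
    by (rule integral_subset_le)
      (auto simp: lo_def hi_def int thrashing_rate_nonneg[OF thr m_nonneg])
  also have "\<dots> = integral {lo..r k} (rate \<sigma> r m k) + work \<sigma> r m k (r k) hi"
    unfolding work_def
    by (rule Henstock_Kurzweil_Integration.integral_combine[symmetric])
      (auto simp: lo_def hi_def int)
  also have "integral {lo..r k} (rate \<sigma> r m k) = 0"
    using integral_cong[of "{lo..r k}" "rate \<sigma> r m k" "\<lambda>_. 0"]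
      thrashing_rate_eq_0_before_release[OF thr] by auto
  also have "work \<sigma> r m k (r k) hi \<le> w k"
    by (rule thrashing_work_le_demand) fact+
  finally show ?thesis by simp
qed

text \<open>m k * (d k - r k) is the speed job k has at its deadline, the largest it can reach in
  a schedule respecting its window.\<close>

definition load :: "'j set \<Rightarrow> ('j \<Rightarrow> real) \<Rightarrow> ('j \<Rightarrow> real) \<Rightarrow> ('j \<Rightarrow> real)
     \<Rightarrow> (real \<Rightarrow> 'j option) \<Rightarrow> real \<Rightarrow> real" where
  "load J r d m \<sigma> t = (\<Sum>k\<in>J. rate \<sigma> r m k t / (m k * (d k - r k)))"

lemma load_idle: "\<sigma> t = None \<Longrightarrow> load J r d m \<sigma> t = 0"
  by (simp add: load_def rate_def)

lemma load_running:
  assumes "finite J" "\<sigma> t = Some k" "k \<in> J" "m k \<noteq> 0"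
  shows "load J r d m \<sigma> t = (t - r k) / (d k - r k)"
proof -
  have "load J r d m \<sigma> t = (\<Sum>i\<in>J. if i = k then m k * (t - r k) / (m k * (d k - r k)) else 0)"
    unfolding load_def by (rule sum.cong) (auto simp: rate_def assms(2))
  then show ?thesis using assms by simp
qed

lemma load_integrable:
  assumes "finite J" "\<And>k. k \<in> J \<Longrightarrow> rate \<sigma> r m k integrable_on {a..b}"
  shows "load J r d m \<sigma> integrable_on {a..b}"
  unfolding load_def by (intro integrable_sum integrable_on_divide assms)

lemma load_le_1_within_windows:
  assumes "finite J" "\<And>t k. \<tau> t = Some k \<Longrightarrow> r k \<le> t \<and> t \<le> d k"
    and "\<And>k. k \<in> J \<Longrightarrow> r k < d k \<and> 0 < m k"
  shows "load J r d m \<tau> t \<le> 1"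
proof (cases "\<tau> t")
  case (Some k)
  show ?thesis
  proof (cases "k \<in> J")
    case True
    then have "load J r d m \<tau> t = (t - r k) / (d k - r k)"
      using assms(1) assms(3)[OF True] Some by (intro load_running) auto
    then show ?thesis using assms(2)[OF Some] assms(3)[OF True] by simp
  next
    case False
    then have "load J r d m \<tau> t = 0"
      using Some unfolding load_def rate_def by (auto intro!: sum.neutral)
    then show ?thesis by simp
  qed
qed (simp add: load_idle)

lemma thrashing_load_ge_2:
  assumes thr: "thrashing J r d w m \<sigma>" and "finite J" "\<And>k. k \<in> J \<Longrightarrow> 0 < m k"
    and "thrash_active J r d w m \<sigma> t \<noteq> {}"
  shows "2 \<le> load J r d m \<sigma> t"
proof -
  obtain k where k: "\<sigma> t = Some k" using thrashing_runs_some_active[OF thr assms(4)] by auto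
  then have "k \<in> thrash_active J r d w m \<sigma> t" by (rule thrashing_runs_active[OF thr])
  then have "k \<in> J" "2 \<le> (t - r k) / (d k - r k)" by (auto simp: thrash_active_def)
  moreover have "load J r d m \<sigma> t = (t - r k) / (d k - r k)"
    using assms(2) assms(3)[OF \<open>k \<in> J\<close>] k \<open>k \<in> J\<close> by (intro load_running) auto
  ultimately show ?thesis by simp
qed

lemma integral_load_mono:
  assumes "finite J" "\<And>k. k \<in> J \<Longrightarrow> 0 < m k * (d k - r k)"
    and "\<And>k. k \<in> J \<Longrightarrow> rate \<sigma> r m k integrable_on {a..b}"
    and "\<And>k. k \<in> J \<Longrightarrow> rate \<tau> r m k integrable_on {c..e}"
    and "\<And>k. k \<in> J \<Longrightarrow> integral {a..b} (rate \<sigma> r m k) \<le> integral {c..e} (rate \<tau> r m k)"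
  shows "integral {a..b} (load J r d m \<sigma>) \<le> integral {c..e} (load J r d m \<tau>)"
  unfolding load_def using assms
  by (simp add: integral_sum integrable_on_divide)
    (intro sum_mono divide_right_mono; simp add: less_imp_le)

lemma thrashing_integral_rate_le_reference:
  assumes thr: "thrashing J r d w m \<sigma>" and m_nonneg: "\<And>k. k \<in> J \<Longrightarrow> 0 \<le> m k"
    and "k \<in> J" "0 \<le> w k"
    and demand: "w k \<le> work \<tau> r m k (r k) (d k)"
    and \<tau>_nonneg: "\<And>t. 0 \<le> rate \<tau> r m k t"
    and \<tau>_int: "\<And>a b. rate \<tau> r m k integrable_on {a..b}"
    and runs: "\<And>t. t \<in> {a..b} \<Longrightarrow> \<sigma> t = Some k \<Longrightarrow> c \<le> r k \<and> d k \<le> b"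
  shows "integral {a..b} (rate \<sigma> r m k) \<le> integral {c..b} (rate \<tau> r m k)"
proof (cases "\<exists>t\<in>{a..b}. \<sigma> t = Some k")
  case True
  then have "c \<le> r k" "d k \<le> b" using runs by auto
  have "integral {a..b} (rate \<sigma> r m k) \<le> w k"
    by (rule thrashing_integral_rate_le_demand) fact+
  also note demand
  also have "work \<tau> r m k (r k) (d k) \<le> integral {c..b} (rate \<tau> r m k)"
    unfolding work_def
    by (rule integral_subset_le) (use \<open>c \<le> r k\<close> \<open>d k \<le> b\<close> \<tau>_nonneg \<tau>_int in auto)
  finally show ?thesis .
next
  case False
  then have "integral {a..b} (rate \<sigma> r m k) = 0"
    using integral_cong[of "{a..b}" "rate \<sigma> r m k" "\<lambda>_. 0"] by (auto simp: rate_def)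
  also have "0 \<le> integral {c..b} (rate \<tau> r m k)"
    by (rule integral_nonneg) (use \<tau>_nonneg \<tau>_int in auto)
  finally show ?thesis .
qed

lemma thrashing_unfinished_stretch_le_4:
  assumes "finite J" and jobs: "\<forall>j\<in>J. r j < d j \<and> 0 < w j \<and> 0 < m j"
    and "feasible J r d w m" and thr: "thrashing J r d w m \<sigma>"
    and "j \<in> J" and unfinished: "work \<sigma> r m j (r j) t < w j"
  shows "t - r j \<le> 4 * (d j - r j)"
proof -
  obtain \<tau> where \<tau>_valid: "valid_schedule J r m \<tau>"
    and \<tau>_windows: "\<And>t k. \<tau> t = Some k \<Longrightarrow> r k \<le> t \<and> t \<le> d k"
    and \<tau>_demand: "\<And>k. k \<in> J \<Longrightarrow> w k \<le> work \<tau> r m k (r k) (d k)"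
    using assms(3) unfolding feasible_def by blast
  have "r j < d j" using jobs \<open>j \<in> J\<close> by blast
  have m_pos: "\<And>k. k \<in> J \<Longrightarrow> 0 < m k" using jobs by auto
  have \<sigma>_int: "\<And>k a b. k \<in> J \<Longrightarrow> rate \<sigma> r m k integrable_on {a..b}"
    using thrashing_rate_integrable[OF thr] by blast
  have \<sigma>_nonneg: "\<And>k t. 0 \<le> rate \<sigma> r m k t"
    using thrashing_rate_nonneg[OF thr] m_pos by (simp add: less_imp_le)
  have \<tau>_int: "\<And>k a b. k \<in> J \<Longrightarrow> rate \<tau> r m k integrable_on {a..b}"
    using \<tau>_valid unfolding valid_schedule_def by blast
  have \<tau>_nonneg: "\<And>k t. k \<in> J \<Longrightarrow> 0 \<le> rate \<tau> r m k t"
    using \<tau>_windows m_pos by (simp add: rate_def less_imp_le)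
  define a where "a = r j + 2 * (d j - r j)"
  show ?thesis
  proof (cases "a \<le> t")
    case False
    with \<open>r j < d j\<close> show ?thesis by (simp add: a_def)
  next
    case True
    have j_active: "j \<in> thrash_active J r d w m \<sigma> s" if "s \<in> {a..t}" for s
    proof -
      have "r j \<le> s" "2 \<le> (s - r j) / (d j - r j)"
        using that \<open>r j < d j\<close> by (auto simp: a_def le_divide_eq)
      moreover have "work \<sigma> r m j (r j) s \<le> work \<sigma> r m j (r j) t"
        unfolding work_def
        by (rule integral_subset_le) (use that \<open>j \<in> J\<close> \<sigma>_int \<sigma>_nonneg in auto)
      ultimately show ?thesis using unfinished \<open>j \<in> J\<close> by (auto simp: thrash_active_def)
    qed
    have busy: "thrash_active J r d w m \<sigma> s \<noteq> {}" if "a \<le> s" "s \<le> t" for s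
      using j_active that by auto
    have "2 * (t - a) = integral {a..t} (\<lambda>_. 2)" using True by simp
    also have "\<dots> \<le> integral {a..t} (load J r d m \<sigma>)"
      by (intro integral_le load_integrable thrashing_load_ge_2[OF thr] assms(1) m_pos busy \<sigma>_int)
        auto
    also have "\<dots> \<le> integral {r j..t} (load J r d m \<tau>)"
    proof (rule integral_load_mono)
      fix k assume "k \<in> J"
      show "integral {a..t} (rate \<sigma> r m k) \<le> integral {r j..t} (rate \<tau> r m k)"
      proof (rule thrashing_integral_rate_le_reference[OF thr])
        fix s assume s: "s \<in> {a..t}" "\<sigma> s = Some k"
        then have "k \<in> thrash_active J r d w m \<sigma> s" by (intro thrashing_runs_active[OF thr])
        moreover have "r k < d k" using jobs \<open>k \<in> J\<close> by blast
        ultimately have "d k \<le> s" by (rule thrash_active_deadline_passed)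
        then show "r j \<le> r k \<and> d k \<le> t"
          using thrashing_preempts_for_later_released[OF thr j_active s(2)] s(1) by auto
      qed (use \<open>k \<in> J\<close> jobs \<tau>_demand \<tau>_nonneg \<tau>_int in \<open>auto simp: less_imp_le\<close>)
    qed (use assms(1) jobs \<sigma>_int \<tau>_int in auto)
    also have "\<dots> \<le> integral {r j..t} (\<lambda>_. 1)"
      using \<tau>_windows jobs \<tau>_int
      by (intro integral_le load_integrable load_le_1_within_windows assms(1)) auto
    also have "\<dots> = t - r j" using True \<open>r j < d j\<close> by (simp add: a_def)
    finally show ?thesis by (simp add: a_def)
  qed
qed

theorem mainTheorem7:
  fixes J :: "'j set" and r d w m :: "'j \<Rightarrow> real" and \<sigma> :: "real \<Rightarrow> 'j option"
  assumes "finite J"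
    and "\<forall>j\<in>J. r j < d j \<and> 0 < w j \<and> 0 < m j"
    and "feasible J r d w m"
    and "thrashing J r d w m \<sigma>"
  shows "\<forall>j\<in>J. (\<exists>t\<ge>r j. work \<sigma> r m j (r j) t \<ge> w j) \<and>
                 (completion_time \<sigma> r w m j - r j) / (d j - r j) \<le> 4"
proof
  fix j assume "j \<in> J"
  define T where "T = r j + 4 * (d j - r j)"
  have "r j < d j" using assms(2) \<open>j \<in> J\<close> by blast
  then have "r j \<le> T" by (simp add: T_def)
  have done_after_T: "w j \<le> work \<sigma> r m j (r j) t" if "T < t" for t
  proof (rule ccontr)
    assume "\<not> w j \<le> work \<sigma> r m j (r j) t"
    then have "t - r j \<le> 4 * (d j - r j)"
      by (intro thrashing_unfinished_stretch_le_4[OF assms \<open>j \<in> J\<close>]) simp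
    then show False using that by (simp add: T_def)
  qed
  have "{T<..} \<subseteq> {t. r j \<le> t \<and> w j \<le> work \<sigma> r m j (r j) t}"
    using done_after_T \<open>r j \<le> T\<close> by auto
  then have "Inf {t. r j \<le> t \<and> w j \<le> work \<sigma> r m j (r j) t} \<le> Inf {T<..}"
    by (intro cInf_superset_mono) (auto intro: bdd_belowI[of _ "r j"])
  then have "completion_time \<sigma> r w m j \<le> T" by (simp add: completion_time_def)
  moreover have "\<exists>t\<ge>r j. w j \<le> work \<sigma> r m j (r j) t"
    using done_after_T[of "T + 1"] \<open>r j \<le> T\<close> by (intro exI[of _ "T + 1"]) auto
  ultimately show "(\<exists>t\<ge>r j. work \<sigma> r m j (r j) t \<ge> w j) \<and>
                 (completion_time \<sigma> r w m j - r j) / (d j - r j) \<le> 4"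
    using \<open>r j < d j\<close> by (auto simp: T_def divide_le_eq)
qed

end
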